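(* Consider the algorithm in the context at epoch $t$ with batch size $B_t$. Suppose $\delta\in(0,1)$ and $B_t$ satisfy (i) $\mathrm{e}^{\frac{\delta B_t}{2(1-2\delta)}}\le\frac{2K}{\delta}\le\mathrm{e}^{\frac{B_t}{2}}$ and (ii) $\delta\le\frac{1}{25KB_t}$. Let $e_t=\mu_t-\nabla f(\tilde{x}_{t-1})$ and $C=2\log(2K/\delta)$. Then $$\mathbb{E}\|e_t\|^2\le\frac{4\mathcal{V}^2}{(1-\alpha)^2KB_t}+\frac{272\,\alpha^2\mathcal{V}^2C}{(1-\alpha)^2B_t}.$$
   Context: Setting: $f(x)=\mathbb{E}_{\xi\sim\mathcal{D}}f(x;\xi)$ with $\|\nabla f(x;\xi)-\nabla f(x)\|\le\mathcal{V}$ for all $x$ and all $\xi\sim\mathcal{D}$. There are $K$ worker nodes (WNs), of which the honest set $\mathcal{G}$ satisfies $|\mathcal{G}|\ge(1-\alpha)K$, $\alpha\in[0,1/2)$; the others are Byzantine. At epoch $t$, with current point $\tilde{x}_{t-1}$, each honest WN $k\in\mathcal{G}$ sends $\mu_t^{(k)}=\frac{1}{B_t}\sum_{i=1}^{B_t}\nabla f(\tilde{x}_{t-1};\xi_{t,i}^{(k)})$ with $\xi_{t,i}^{(k)}$ i.i.d. from $\mathcal{D}$ (independent across $i,k$), and each Byzantine WN sends an arbitrary vector. Filtering: with $\mathfrak{T}_\mu=2\mathcal{V}\sqrt{C/B_t}$, Rule 1 sets $\mu_t^{\mathrm{med}}=\mu_t^{(k)}$ for any $k$ with $|\{k':\|\mu_t^{(k')}-\mu_t^{(k)}\|\le\mathfrak{T}_\mu\}|>K/2$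 and $\mathcal{G}_t=\{k:\|\mu_t^{(k)}-\mu_t^{\mathrm{med}}\|\le2\mathfrak{T}_\mu\}$; if this gives $|\mathcal{G}_t|<(1-\alpha)K$, Rule 2 sets $\mu_t^{\mathrm{med}}=\mu_t^{(k)}$ for any $k$ with $|\{k':\|\mu_t^{(k')}-\mu_t^{(k)}\|\le2\mathcal{V}\}|>K/2$ and $\mathcal{G}_t=\{k:\|\mu_t^{(k)}-\mu_t^{\mathrm{med}}\|\le4\mathcal{V}\}$. Finally $\mu_t=\frac{1}{|\mathcal{G}_t|}\sum_{k\in\mathcal{G}_t}\mu_t^{(k)}$. *)

theory Defs
  imports "HOL-Probability.Probability"
begin

definition near_set :: "nat \<Rightarrow> real \<Rightarrow> (nat \<Rightarrow> 'a::real_normed_vector) \<Rightarrow> nat \<Rightarrow> nat set" where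
  "near_set K r m k = {k'. k' < K \<and> norm (m k' - m k) \<le> r}"

definition med_cand :: "nat \<Rightarrow> real \<Rightarrow> (nat \<Rightarrow> 'a::real_normed_vector) \<Rightarrow> nat \<Rightarrow> bool" where
  "med_cand K r m k \<longleftrightarrow> k < K \<and> real (card (near_set K r m k)) > real K / 2"

definition avg_over :: "nat set \<Rightarrow> (nat \<Rightarrow> 'a::real_normed_vector) \<Rightarrow> 'a" where
  "avg_over S m = (1 / real (card S)) *\<^sub>R (\<Sum>k\<in>S. m k)"

text \<open>v is a possible output mu_t of the two-rule filtering procedure applied to the messages m
  of K nodes, with threshold T (= T_mu), fraction alpha and variance bound V.  The choice of the
  index k ("any k") is nondeterministic; Rule 2 is used whenever Rule 1 yields a set that is
  too small or Rule 1 finds no candidate.\<close>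
definition filter_output ::
  "nat \<Rightarrow> real \<Rightarrow> real \<Rightarrow> real \<Rightarrow> (nat \<Rightarrow> 'a::real_normed_vector) \<Rightarrow> 'a \<Rightarrow> bool" where
  "filter_output K \<alpha> V T m v \<longleftrightarrow>
     (\<exists>k. med_cand K T m k \<and> real (card (near_set K (2*T) m k)) \<ge> (1 - \<alpha>) * real K
          \<and> v = avg_over (near_set K (2*T) m k) m)
   \<or> (((\<exists>k. med_cand K T m k \<and> real (card (near_set K (2*T) m k)) < (1 - \<alpha>) * real K)
         \<or> \<not> (\<exists>k. med_cand K T m k))
      \<and> (\<exists>k. med_cand K (2*V) m k \<and> v = avg_over (near_set K (4*V) m k) m))"

end

theory Submission
  imports Defs
begin

(* For an honest node the deviation of its message from the gradient is 1/B times a sum of B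
   i.i.d. centred vectors of norm at most V. Since cosh o sqrt is convex, cosh (l |u + y|) has an
   affine majorant in y, so adding one centred summand multiplies E cosh (l |S|) by at most
   cosh (l V) <= exp (l^2 V^2 / 2); the Chernoff bound then gives the vector Hoeffding inequality
   P (|S| >= r) <= 2 exp (- r^2 / (2 B V^2)). With C = 2 log (2K / delta), outside an event of
   probability at most delta every honest message lies within T_mu / 2 of the gradient; then Rule 1
   fires, keeps all honest nodes, and the output deviates by at most the honest average deviation
   plus alpha * 7/2 * T_mu. On the bad event the median argument still bounds the deviation by 7 V.
   Squaring and integrating, the three contributions are 2 V^2 / ((1 - alpha)^2 K B),
   98 alpha^2 V^2 C / B and 49 V^2 delta <= 2 V^2 / (K B). *)

section \<open>Hyperbolic cosine estimates\<close>

lemma power_two_mult_fact_le_fact_double: "2 ^ m * fact m \<le> (fact (2 * m) :: nat)"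
proof (induction m)
  case (Suc m)
  have "2 ^ Suc m * fact (Suc m) = (2 * m + 2) * (2 ^ m * fact m)"
    by (simp add: algebra_simps)
  also have "\<dots> \<le> (2 * m + 2) * ((2 * m + 1) * fact (2 * m))"
    using Suc by (intro mult_le_mono2 order_trans[OF Suc.IH]) simp
  also have "\<dots> = fact (2 * Suc m)"
    by (simp add: fact_Suc)
  finally show ?case .
qed simp

lemma cosh_le_exp_half_square: "cosh (y :: real) \<le> exp (y\<^sup>2 / 2)"
proof -
  define z where "z = y\<^sup>2 / 2"
  have "(if even n then y ^ n /\<^sub>R fact n else 0)
      \<le> (if even n then z ^ (n div 2) / fact (n div 2) else 0)" for n
  proof (cases "even n")
    case True
    then obtain m where n: "n = 2 * m" by blast
    have "(2::real) ^ m * fact m \<le> fact n"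
      unfolding n using of_nat_mono[OF power_two_mult_fact_le_fact_double[of m]] by simp
    then have "y ^ n / fact n \<le> (y\<^sup>2) ^ m / (2 ^ m * fact m)"
      unfolding n power_mult by (intro divide_left_mono) auto
    also have "\<dots> = z ^ m / fact m"
      by (simp add: z_def power_divide)
    finally show ?thesis
      using True n by (simp add: real_scaleR_def divide_inverse mult.commute)
  qed simp
  moreover have "(\<lambda>n. if even n then z ^ (n div 2) / fact (n div 2) else 0) sums exp z"
    using sums_if[OF sums_zero exp_converges[of z]]
    by (simp only: add_0_left real_scaleR_def divide_inverse mult.commute)
  ultimately show ?thesis
    unfolding z_def[symmetric] by (rule sums_le[OF _ cosh_converges])
qed

lemma convex_on_cosh_sqrt: "convex_on {0..} (\<lambda>u. cosh (sqrt u))"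
proof (rule convex_onI)
  define F where "F u n = (if even n then u ^ (n div 2) / fact n else (0::real))" for u n
  have F_sums: "F u sums cosh (sqrt u)" if "0 \<le> u" for u
  proof -
    have "sqrt u ^ n = u ^ (n div 2)" if "even n" for n
      using \<open>0 \<le> u\<close> that by (auto simp: power_mult elim!: evenE)
    then have "F u = (\<lambda>n. if even n then sqrt u ^ n /\<^sub>R fact n else 0)"
      by (auto simp: F_def fun_eq_iff divide_inverse mult.commute)
    then show ?thesis
      using cosh_converges[of "sqrt u"] by simp
  qed
  fix t x y :: real
  assume t: "0 < t" "t < 1" and xy: "x \<in> {0..}" "y \<in> {0..}"
  have "convex_on {0..} (\<lambda>u::real. u ^ k)" for k
    by (cases "even k") (auto intro: convex_power_odd convex_on_subset[OF convex_power_even])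
  from convex_onD[OF this, of t x y]
  have power_convex: "((1 - t) * x + t * y) ^ k \<le> (1 - t) * x ^ k + t * y ^ k" for k
    using t xy by simp
  show "cosh (sqrt ((1 - t) *\<^sub>R x + t *\<^sub>R y)) \<le> (1 - t) * cosh (sqrt x) + t * cosh (sqrt y)"
  proof (rule sums_le[OF _ F_sums sums_add[OF sums_mult[OF F_sums] sums_mult[OF F_sums]]])
    show "F ((1 - t) *\<^sub>R x + t *\<^sub>R y) n \<le> (1 - t) * F x n + t * F y n" for n
      using divide_right_mono[OF power_convex[of "n div 2"], of "fact n"]
      by (simp add: F_def add_divide_distrib)
  qed (use t xy in simp_all)
qed simp

lemma cosh_sqrt_chord_le:
  fixes a c p l :: real
  assumes a: "0 < a" and c: "0 < c" and p: "\<bar>p\<bar> \<le> a * c" and l: "0 \<le> l"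
  shows "cosh (l * sqrt (a\<^sup>2 + c\<^sup>2 + 2 * p))
    \<le> cosh (l * a) * cosh (l * c) + sinh (l * a) * sinh (l * c) / (a * c) * p"
proof -
  define q where "q = p / (a * c)"
  have p_eq: "p = q * (a * c)"
    using a c by (simp add: q_def)
  have q: "\<bar>q\<bar> \<le> 1"
  proof (rule mult_right_le_imp_le)
    show "\<bar>q\<bar> * (a * c) \<le> 1 * (a * c)"
      using p a c unfolding p_eq by (simp add: abs_mult)
  qed (use a c in simp)
  \<comment> \<open>The argument is a convex combination of its values at \<open>p = a c\<close> and \<open>p = - a c\<close>.\<close>
  define t where "t = (1 - q) / 2"
  have t: "0 \<le> t" "t \<le> 1"
    using q by (auto simp: t_def)
  have "0 \<le> a\<^sup>2 + c\<^sup>2 - 2 * (a * c)"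
    using zero_le_power2[of "a - c"] by (simp add: power2_eq_square algebra_simps)
  then have "0 \<le> a\<^sup>2 + c\<^sup>2 + 2 * p"
    using p by linarith
  then have "(l * sqrt (a\<^sup>2 + c\<^sup>2 + 2 * p))\<^sup>2 = l\<^sup>2 * (a\<^sup>2 + c\<^sup>2 + 2 * p)"
    by (simp add: power_mult_distrib)
  also have "\<dots> = (1 - t) * (l * (a + c))\<^sup>2 + t * (l * (a - c))\<^sup>2"
    unfolding t_def p_eq by (simp add: power2_eq_square field_simps)
  finally have "sqrt ((1 - t) * (l * (a + c))\<^sup>2 + t * (l * (a - c))\<^sup>2)
      = \<bar>l * sqrt (a\<^sup>2 + c\<^sup>2 + 2 * p)\<bar>"
    by (metis real_sqrt_abs)
  then have "cosh (l * sqrt (a\<^sup>2 + c\<^sup>2 + 2 * p))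
      = cosh (sqrt ((1 - t) *\<^sub>R (l * (a + c))\<^sup>2 + t *\<^sub>R (l * (a - c))\<^sup>2))"
    by (metis cosh_real_abs real_scaleR_def)
  also have "\<dots> \<le> (1 - t) * cosh (sqrt ((l * (a + c))\<^sup>2)) + t * cosh (sqrt ((l * (a - c))\<^sup>2))"
    using t by (intro convex_onD[OF convex_on_cosh_sqrt]) auto
  also have "\<dots> = (1 - t) * cosh (l * a + l * c) + t * cosh (l * a - l * c)"
    by (simp only: real_sqrt_abs cosh_real_abs distrib_left right_diff_distrib)
  also have "\<dots> = cosh (l * a) * cosh (l * c) + q * (sinh (l * a) * sinh (l * c))"
    unfolding cosh_add cosh_diff t_def by (simp add: algebra_simps add_divide_distrib)
  also have "\<dots> = cosh (l * a) * cosh (l * c) + sinh (l * a) * sinh (l * c) / (a * c) * p"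
    by (simp add: q_def)
  finally show ?thesis .
qed

lemma cosh_mult_norm_add_le:
  fixes x d :: "'a::real_inner"
  assumes d: "norm d \<le> c" and c: "0 < c" and l: "0 \<le> l"
  shows "cosh (l * norm (x + d))
    \<le> cosh (l * norm x) * cosh (l * c) + sinh (l * norm x) * sinh (l * c) / (norm x * c) * (x \<bullet> d)"
proof (cases "x = 0")
  case True
  have "cosh (l * norm d) \<le> cosh (l * c)"
    using mult_left_mono[OF d l] c l by (subst cosh_real_nonneg_le_iff) auto
  then show ?thesis
    using True by simp
next
  case False
  have norm_sq: "(norm (x + d))\<^sup>2 = (norm x)\<^sup>2 + (norm d)\<^sup>2 + 2 * (x \<bullet> d)"
    by (simp add: power2_norm_eq_inner inner_add algebra_simps inner_commute)
  have "(norm d)\<^sup>2 \<le> c\<^sup>2"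
    using d by (intro power_mono) auto
  then have radicand: "(norm (x + d))\<^sup>2 \<le> (norm x)\<^sup>2 + c\<^sup>2 + 2 * (x \<bullet> d)"
    using norm_sq by linarith
  then have "norm (x + d) \<le> sqrt ((norm x)\<^sup>2 + c\<^sup>2 + 2 * (x \<bullet> d))"
    by (rule real_le_rsqrt)
  moreover have "0 \<le> sqrt ((norm x)\<^sup>2 + c\<^sup>2 + 2 * (x \<bullet> d))"
    using radicand zero_le_power2[of "norm (x + d)"] by (intro real_sqrt_ge_zero) linarith
  ultimately have "cosh (l * norm (x + d)) \<le> cosh (l * sqrt ((norm x)\<^sup>2 + c\<^sup>2 + 2 * (x \<bullet> d)))"
    using l by (subst cosh_real_nonneg_le_iff) (auto intro: mult_left_mono)
  also have "\<dots> \<le> cosh (l * norm x) * cosh (l * c)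
      + sinh (l * norm x) * sinh (l * c) / (norm x * c) * (x \<bullet> d)"
  proof (rule cosh_sqrt_chord_le)
    show "\<bar>x \<bullet> d\<bar> \<le> norm x * c"
      using Cauchy_Schwarz_ineq2[of x d] d by (meson mult_left_mono norm_ge_zero order_trans)
  qed (use False c l in auto)
  finally show ?thesis .
qed

lemma exp_mult_cosh_power_le:
  fixes l r V :: real
  shows "exp (- (l * r)) * cosh (l * V) ^ n \<le> exp (real n * (l * V)\<^sup>2 / 2 - l * r)"
proof -
  have "cosh (l * V) ^ n \<le> exp ((l * V)\<^sup>2 / 2) ^ n"
    by (intro power_mono cosh_le_exp_half_square) (simp add: order_less_imp_le)
  also have "\<dots> = exp (real n * (l * V)\<^sup>2 / 2)"
    by (simp add: exp_of_nat_mult[symmetric])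
  finally have "exp (- (l * r)) * cosh (l * V) ^ n \<le> exp (- (l * r)) * exp (real n * (l * V)\<^sup>2 / 2)"
    by (intro mult_left_mono) auto
  also have "\<dots> = exp (real n * (l * V)\<^sup>2 / 2 - l * r)"
    by (simp only: diff_conv_add_uminus exp_add mult.commute)
  finally show ?thesis .
qed

section \<open>A Hoeffding inequality for sums of bounded random vectors\<close>

lemma sum_singleton_times: "(\<Sum>p\<in>{k} \<times> A. f p) = (\<Sum>i\<in>A. f (k, i))"
  using sum.cartesian_product[of "\<lambda>k i. f (k, i)" A "{k}"] by simp

lemma borel_measurable_PiM_sum_components:
  fixes Y :: "'b \<Rightarrow> 'a::euclidean_space"
  assumes "Y \<in> borel_measurable N" and "J \<subseteq> I"
  shows "(\<lambda>w. \<Sum>p\<in>J. Y (w p)) \<in> borel_measurable (PiM I (\<lambda>_. N))"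
proof (rule borel_measurable_sum)
  fix p
  assume "p \<in> J"
  then show "(\<lambda>w. Y (w p)) \<in> borel_measurable (PiM I (\<lambda>_. N))"
    using assms measurable_comp[OF measurable_component_singleton[of p I "\<lambda>_. N"]]
    by (auto simp: comp_def)
qed

lemma (in prob_space) nn_integral_PiM_restrict:
  assumes "J \<subseteq> I" "finite I" "f \<in> borel_measurable (PiM J (\<lambda>_. M))"
  shows "(\<integral>\<^sup>+w. f (restrict w J) \<partial>PiM I (\<lambda>_. M)) = (\<integral>\<^sup>+w. f w \<partial>PiM J (\<lambda>_. M))"
proof -
  interpret product_prob_space "\<lambda>_. M"
    by (rule product_prob_spaceI) (rule prob_space_axioms)
  have "(\<integral>\<^sup>+w. f w \<partial>PiM J (\<lambda>_. M))
      = (\<integral>\<^sup>+w. f w \<partial>distr (PiM I (\<lambda>_. M)) (PiM J (\<lambda>_. M)) (\<lambda>w. restrict w J))"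
    using distr_restrict[OF assms(1,2)] by (rule arg_cong)
  then show ?thesis
    using assms by (simp add: nn_integral_distr measurable_restrict_subset)
qed

lemma (in prob_space) nn_integral_le_of_linear_majorant:
  fixes Y :: "'a \<Rightarrow> 'b::euclidean_space"
  assumes Y: "integrable M Y" "expectation Y = 0"
    and majorant: "\<And>\<xi>. \<xi> \<in> space M \<Longrightarrow> f \<xi> \<le> c + w \<bullet> Y \<xi>"
    and f_nonneg: "\<And>\<xi>. \<xi> \<in> space M \<Longrightarrow> 0 \<le> f \<xi>"
  shows "(\<integral>\<^sup>+\<xi>. f \<xi> \<partial>M) \<le> ennreal c"
proof -
  have "(\<integral>\<^sup>+\<xi>. f \<xi> \<partial>M) \<le> (\<integral>\<^sup>+\<xi>. c + w \<bullet> Y \<xi> \<partial>M)"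
    using majorant by (intro nn_integral_mono ennreal_leI)
  also have "\<dots> = ennreal (\<integral>\<xi>. c + w \<bullet> Y \<xi> \<partial>M)"
    using Y majorant f_nonneg
    by (intro nn_integral_eq_integral AE_I2) (auto intro: order_trans)
  also have "(\<integral>\<xi>. c + w \<bullet> Y \<xi> \<partial>M) = c"
    using Y by (simp add: prob_space)
  finally show ?thesis .
qed

lemma (in prob_space) nn_integral_PiM_insert_sum:
  fixes Y :: "'a \<Rightarrow> 'b::euclidean_space" and \<Phi> :: "'b \<Rightarrow> real"
  assumes J: "finite J" "i \<notin> J" and Y: "Y \<in> borel_measurable M" and \<Phi>: "\<Phi> \<in> borel_measurable borel"
  shows "(\<integral>\<^sup>+w. \<Phi> (z + (\<Sum>p\<in>insert i J. Y (w p))) \<partial>PiM (insert i J) (\<lambda>_. M))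
    = (\<integral>\<^sup>+w. (\<integral>\<^sup>+y. \<Phi> ((z + (\<Sum>p\<in>J. Y (w p))) + Y y) \<partial>M) \<partial>PiM J (\<lambda>_. M))"
proof -
  interpret product_prob_space "\<lambda>_. M"
    by (rule product_prob_spaceI) (rule prob_space_axioms)
  have sum_upd: "z + (\<Sum>p\<in>insert i J. Y ((w(i := y)) p)) = (z + (\<Sum>p\<in>J. Y (w p))) + Y y" for w y
    using J by (auto simp: ac_simps intro: sum.cong)
  have "(\<lambda>w. ennreal (\<Phi> (z + (\<Sum>p\<in>insert i J. Y (w p)))))
      \<in> borel_measurable (PiM (insert i J) (\<lambda>_. M))"
    by (intro measurable_compose[OF _ measurable_ennreal] measurable_compose[OF _ \<Phi>]
        borel_measurable_add borel_measurable_const borel_measurable_PiM_sum_components Y order_refl)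
  then have "(\<integral>\<^sup>+w. \<Phi> (z + (\<Sum>p\<in>insert i J. Y (w p))) \<partial>PiM (insert i J) (\<lambda>_. M))
      = (\<integral>\<^sup>+w. (\<integral>\<^sup>+y. \<Phi> (z + (\<Sum>p\<in>insert i J. Y ((w(i := y)) p))) \<partial>M) \<partial>PiM J (\<lambda>_. M))"
    by (rule product_nn_integral_insert[OF J])
  then show ?thesis
    by (simp only: sum_upd)
qed

lemma (in prob_space) nn_integral_PiM_sum_le:
  fixes Y :: "'a \<Rightarrow> 'b::euclidean_space" and \<Phi> :: "'b \<Rightarrow> real"
  assumes Y: "Y \<in> borel_measurable M"
    and \<Phi>: "\<Phi> \<in> borel_measurable borel" "\<And>u. 0 \<le> \<Phi> u"
    and a: "1 \<le> a" and b: "0 \<le> b"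
    and drift: "\<And>u. (\<integral>\<^sup>+\<xi>. \<Phi> (u + Y \<xi>) \<partial>M) \<le> ennreal (a * \<Phi> u + b)"
    and J: "finite J"
  shows "(\<integral>\<^sup>+w. \<Phi> (z + (\<Sum>p\<in>J. Y (w p))) \<partial>PiM J (\<lambda>_. M))
    \<le> ennreal (a ^ card J * (\<Phi> z + real (card J) * b))"
  using J
proof (induction J arbitrary: z rule: finite_induct)
  case empty
  interpret P: prob_space "PiM {} (\<lambda>_. M)"
    by (rule prob_space_PiM) (rule prob_space_axioms)
  show ?case
    by (simp add: P.emeasure_space_1)
next
  case (insert i J)
  interpret PJ: prob_space "PiM J (\<lambda>_. M)"
    by (rule prob_space_PiM) (rule prob_space_axioms)
  define S where "S w = (\<Sum>p\<in>J. Y (w p))" for w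
  have S: "S \<in> borel_measurable (PiM J (\<lambda>_. M))"
    unfolding S_def by (rule borel_measurable_PiM_sum_components[OF Y order_refl])
  have "(\<integral>\<^sup>+w. \<Phi> (z + (\<Sum>p\<in>insert i J. Y (w p))) \<partial>PiM (insert i J) (\<lambda>_. M))
      = (\<integral>\<^sup>+w. (\<integral>\<^sup>+y. \<Phi> ((z + S w) + Y y) \<partial>M) \<partial>PiM J (\<lambda>_. M))"
    unfolding S_def by (rule nn_integral_PiM_insert_sum[OF insert.hyps Y \<Phi>(1)])
  also have "\<dots> \<le> (\<integral>\<^sup>+w. ennreal a * \<Phi> (z + S w) + ennreal b \<partial>PiM J (\<lambda>_. M))"
    using drift a b \<Phi>(2) by (intro nn_integral_mono) (simp add: ennreal_plus ennreal_mult)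
  also have "\<dots> = ennreal a * (\<integral>\<^sup>+w. \<Phi> (z + S w) \<partial>PiM J (\<lambda>_. M)) + ennreal b"
    using S \<Phi>(1) by (simp add: nn_integral_add nn_integral_cmult PJ.emeasure_space_1)
  also have "\<dots> \<le> ennreal a * ennreal (a ^ card J * (\<Phi> z + real (card J) * b)) + ennreal b"
    using insert.IH unfolding S_def by (intro add_mono mult_left_mono) auto
  also have "\<dots> = ennreal (a ^ Suc (card J) * (\<Phi> z + real (card J) * b) + b)"
    using a b \<Phi>(2) by (simp add: ennreal_plus ennreal_mult mult.assoc)
  also have "\<dots> \<le> ennreal (a ^ card (insert i J) * (\<Phi> z + real (card (insert i J)) * b))"
  proof (rule ennreal_leI)
    have "b \<le> a ^ Suc (card J) * b"
      using mult_right_mono[OF one_le_power[OF a, of "Suc (card J)"] b] by simp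
    then show "a ^ Suc (card J) * (\<Phi> z + real (card J) * b) + b
        \<le> a ^ card (insert i J) * (\<Phi> z + real (card (insert i J)) * b)"
      using insert.hyps by (simp add: algebra_simps)
  qed
  finally show ?case .
qed

locale bounded_centered_rv = prob_space D for D :: "'b measure" +
  fixes Y :: "'b \<Rightarrow> 'a::euclidean_space" and V :: real
  assumes integrable_Y: "integrable D Y"
    and expectation_Y: "expectation Y = 0"
    and norm_Y_le: "\<And>\<xi>. \<xi> \<in> space D \<Longrightarrow> norm (Y \<xi>) \<le> V"
begin

lemma borel_measurable_Y: "Y \<in> borel_measurable D"
  using integrable_Y by (rule borel_measurable_integrable)

lemma V_nonneg: "0 \<le> V"
proof -
  obtain \<xi> where "\<xi> \<in> space D"
    using not_empty by blast
  then show ?thesis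
    using norm_Y_le[of \<xi>] norm_ge_zero[of "Y \<xi>"] by linarith
qed

lemma nn_integral_norm_sum_sq_le:
  assumes "finite J"
  shows "(\<integral>\<^sup>+w. (norm (\<Sum>p\<in>J. Y (w p)))\<^sup>2 \<partial>PiM J (\<lambda>_. D)) \<le> ennreal (real (card J) * V\<^sup>2)"
proof -
  have "(\<integral>\<^sup>+w. (norm (0 + (\<Sum>p\<in>J. Y (w p))))\<^sup>2 \<partial>PiM J (\<lambda>_. D))
      \<le> ennreal (1 ^ card J * ((norm (0::'a))\<^sup>2 + real (card J) * V\<^sup>2))"
  proof (rule nn_integral_PiM_sum_le[OF borel_measurable_Y _ _ order_refl _ _ assms])
    fix u :: 'a
    show "(\<integral>\<^sup>+\<xi>. (norm (u + Y \<xi>))\<^sup>2 \<partial>D) \<le> ennreal (1 * (norm u)\<^sup>2 + V\<^sup>2)"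
    proof (rule nn_integral_le_of_linear_majorant[OF integrable_Y expectation_Y, where w = "2 *\<^sub>R u"])
      fix \<xi>
      assume "\<xi> \<in> space D"
      then have "(norm (Y \<xi>))\<^sup>2 \<le> V\<^sup>2"
        using norm_Y_le by (intro power_mono) auto
      then show "(norm (u + Y \<xi>))\<^sup>2 \<le> 1 * (norm u)\<^sup>2 + V\<^sup>2 + (2 *\<^sub>R u) \<bullet> Y \<xi>"
        by (simp add: power2_norm_eq_inner inner_add algebra_simps inner_commute)
    qed simp
  qed (auto intro: borel_measurable_continuous_onI continuous_intros)
  then show ?thesis
    by simp
qed

lemma nn_integral_cosh_norm_sum_le:
  assumes J: "finite J" and V: "0 < V" and l: "0 \<le> l"
  shows "(\<integral>\<^sup>+w. cosh (l * norm (\<Sum>p\<in>J. Y (w p))) \<partial>PiM J (\<lambda>_. D)) \<le> ennreal (cosh (l * V) ^ card J)"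
proof -
  have "(\<integral>\<^sup>+w. cosh (l * norm (0 + (\<Sum>p\<in>J. Y (w p)))) \<partial>PiM J (\<lambda>_. D))
      \<le> ennreal (cosh (l * V) ^ card J * (cosh (l * norm (0::'a)) + real (card J) * 0))"
  proof (rule nn_integral_PiM_sum_le[OF borel_measurable_Y _ _ cosh_real_ge_1 order_refl _ J])
    fix u :: 'a
    define \<kappa> where "\<kappa> = sinh (l * norm u) * sinh (l * V) / (norm u * V)"
    show "(\<integral>\<^sup>+\<xi>. cosh (l * norm (u + Y \<xi>)) \<partial>D) \<le> ennreal (cosh (l * V) * cosh (l * norm u) + 0)"
    proof (rule nn_integral_le_of_linear_majorant[OF integrable_Y expectation_Y, where w = "\<kappa> *\<^sub>R u"])
      fix \<xi>
      assume "\<xi> \<in> space D"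
      then show "cosh (l * norm (u + Y \<xi>)) \<le> cosh (l * V) * cosh (l * norm u) + 0 + (\<kappa> *\<^sub>R u) \<bullet> Y \<xi>"
        using cosh_mult_norm_add_le[OF norm_Y_le V l, of \<xi> u] by (simp add: \<kappa>_def mult.commute)
    qed (simp add: order_less_imp_le)
    show "(\<lambda>u. cosh (l * norm u)) \<in> borel_measurable borel"
      by (rule borel_measurable_continuous_onI) (intro continuous_intros)
  qed (auto intro: order_less_imp_le)
  then show ?thesis
    by simp
qed

lemma nn_integral_exp_norm_sum_le:
  assumes I: "finite I" and J: "J \<subseteq> I" and V: "0 < V" and l: "0 \<le> l"
  shows "(\<integral>\<^sup>+w. exp (l * norm (\<Sum>p\<in>J. Y (w p))) \<partial>PiM I (\<lambda>_. D)) \<le> 2 * ennreal (cosh (l * V) ^ card J)"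
proof -
  define S where "S w = (\<Sum>p\<in>J. Y (w p))" for w
  have S: "S \<in> borel_measurable (PiM J (\<lambda>_. D))"
    unfolding S_def by (intro borel_measurable_PiM_sum_components borel_measurable_Y order_refl)
  have cosh_S[measurable]: "(\<lambda>w. ennreal (cosh (l * norm (S w)))) \<in> borel_measurable (PiM J (\<lambda>_. D))"
    by (intro measurable_compose[OF S] measurable_compose[OF _ measurable_ennreal]
        borel_measurable_continuous_onI continuous_intros)
  have exp_le_cosh: "ennreal (exp x) \<le> 2 * ennreal (cosh x)" for x :: real
  proof -
    have "ennreal (exp x) \<le> ennreal (2 * cosh x)"
      by (rule ennreal_leI) (simp add: cosh_def)
    then show ?thesis
      by (simp add: ennreal_mult)
  qed
  have "(\<integral>\<^sup>+w. exp (l * norm (S w)) \<partial>PiM I (\<lambda>_. D))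
      \<le> (\<integral>\<^sup>+w. 2 * ennreal (cosh (l * norm (S (restrict w J)))) \<partial>PiM I (\<lambda>_. D))"
    using exp_le_cosh by (intro nn_integral_mono) (simp add: S_def)
  also have "\<dots> = (\<integral>\<^sup>+w. 2 * ennreal (cosh (l * norm (S w))) \<partial>PiM J (\<lambda>_. D))"
    by (rule nn_integral_PiM_restrict[OF J I]) measurable
  also have "\<dots> = 2 * (\<integral>\<^sup>+w. cosh (l * norm (S w)) \<partial>PiM J (\<lambda>_. D))"
    by (rule nn_integral_cmult) measurable
  also have "\<dots> \<le> 2 * ennreal (cosh (l * V) ^ card J)"
    using nn_integral_cosh_norm_sum_le[OF finite_subset[OF J I] V l]
    unfolding S_def by (intro mult_left_mono) auto
  finally show ?thesis
    unfolding S_def .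
qed

lemma emeasure_norm_sum_ge_le:
  assumes I: "finite I" and J: "J \<subseteq> I" "J \<noteq> {}" and r: "0 < r" and V: "0 < V"
  shows "emeasure (PiM I (\<lambda>_. D)) {w \<in> space (PiM I (\<lambda>_. D)). r \<le> norm (\<Sum>p\<in>J. Y (w p))}
    \<le> ennreal (2 * exp (- r\<^sup>2 / (2 * real (card J) * V\<^sup>2)))"
proof -
  define n where "n = card J"
  have n: "0 < n"
    using J I by (auto simp: n_def card_gt_0_iff intro: finite_subset)
  \<comment> \<open>The minimiser of the Chernoff exponent \<open>n l\<^sup>2 V\<^sup>2 / 2 - l r\<close>.\<close>
  define l where "l = r / (real n * V\<^sup>2)"
  have l: "0 < l"
    using r n V by (simp add: l_def)
  have "(\<lambda>w. \<Sum>p\<in>J. Y (w p)) \<in> borel_measurable (PiM I (\<lambda>_. D))"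
    using J(1) by (intro borel_measurable_PiM_sum_components borel_measurable_Y)
  then have "emeasure (PiM I (\<lambda>_. D)) {w \<in> space (PiM I (\<lambda>_. D)). r \<le> norm (\<Sum>p\<in>J. Y (w p))}
      \<le> ennreal (exp (- l * r)) * (\<integral>\<^sup>+w. ennreal (exp (l * norm (\<Sum>p\<in>J. Y (w p))))
        * indicator (space (PiM I (\<lambda>_. D))) w \<partial>PiM I (\<lambda>_. D))"
    using l by (intro Chernoff_ineq_nn_integral_ge) auto
  also have "\<dots> = ennreal (exp (- l * r)) * (\<integral>\<^sup>+w. exp (l * norm (\<Sum>p\<in>J. Y (w p))) \<partial>PiM I (\<lambda>_. D))"
    by (intro arg_cong[where f = "\<lambda>x. ennreal (exp (- l * r)) * x"] nn_integral_cong) simp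
  also have "\<dots> \<le> ennreal (exp (- l * r)) * (2 * ennreal (cosh (l * V) ^ n))"
    using nn_integral_exp_norm_sum_le[OF I J(1) V order_less_imp_le[OF l]]
    unfolding n_def by (rule mult_left_mono) simp
  also have "\<dots> = ennreal (2 * (exp (- (l * r)) * cosh (l * V) ^ n))"
    by (simp add: ennreal_mult mult_ac)
  also have "\<dots> \<le> ennreal (2 * exp (real n * (l * V)\<^sup>2 / 2 - l * r))"
    by (intro ennreal_leI mult_left_mono exp_mult_cosh_power_le) simp
  also have "real n * (l * V)\<^sup>2 / 2 - l * r = - r\<^sup>2 / (2 * real n * V\<^sup>2)"
    using n V unfolding l_def by (simp add: field_simps power2_eq_square)
  finally show ?thesis
    unfolding n_def .
qed

lemma norm_block_sum_le:
  assumes "w \<in> space (PiM (H \<times> {..<B}) (\<lambda>_. D))" "k \<in> H"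
  shows "norm (\<Sum>i<B. Y (w (k, i))) \<le> real B * V"
proof -
  have "norm (\<Sum>i<B. Y (w (k, i))) \<le> (\<Sum>i<B. V)"
    using assms by (intro order_trans[OF norm_sum sum_mono] norm_Y_le) (auto simp: space_PiM)
  then show ?thesis
    by simp
qed

lemma borel_measurable_block_sum:
  assumes "k \<in> H"
  shows "(\<lambda>w. \<Sum>i<B. Y (w (k, i))) \<in> borel_measurable (PiM (H \<times> {..<B}) (\<lambda>_. D))"
proof -
  have "{k} \<times> {..<B} \<subseteq> H \<times> {..<B}"
    using assms by auto
  from borel_measurable_PiM_sum_components[OF borel_measurable_Y this]
  show ?thesis
    by (simp add: sum_singleton_times)
qed

lemma sets_block_sum_gt:
  assumes "k \<in> H"
  shows "{w \<in> space (PiM (H \<times> {..<B}) (\<lambda>_. D)). r < norm (\<Sum>i<B. Y (w (k, i)))}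
    \<in> sets (PiM (H \<times> {..<B}) (\<lambda>_. D))"
proof -
  note borel_measurable_block_sum[OF assms, measurable]
  show ?thesis
    by measurable
qed

lemma emeasure_block_sum_gt_le:
  assumes H: "finite H" "k \<in> H" and B: "0 < B" and C: "0 < C"
  shows "emeasure (PiM (H \<times> {..<B}) (\<lambda>_. D))
      {w \<in> space (PiM (H \<times> {..<B}) (\<lambda>_. D)). V * sqrt (real B * C) < norm (\<Sum>i<B. Y (w (k, i)))}
    \<le> ennreal (2 * exp (- C / 2))"
    (is "emeasure ?M ?E \<le> _")
proof (cases "V = 0")
  case True
  then have "?E = {}"
    using norm_block_sum_le[OF _ H(2)] by force
  then show ?thesis
    by (metis emeasure_empty zero_le)
next
  case False
  then have V: "0 < V"
    using V_nonneg by simp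
  have "{w \<in> space ?M. V * sqrt (real B * C) \<le> norm (\<Sum>i<B. Y (w (k, i)))} \<in> sets ?M"
    using borel_measurable_block_sum[OF H(2)] by measurable
  then have "emeasure ?M ?E \<le> emeasure ?M {w \<in> space ?M. V * sqrt (real B * C) \<le> norm (\<Sum>i<B. Y (w (k, i)))}"
    by (intro emeasure_mono) auto
  also have "\<dots> = emeasure ?M {w \<in> space ?M. V * sqrt (real B * C) \<le> norm (\<Sum>p\<in>{k} \<times> {..<B}. Y (w p))}"
    by (simp add: sum_singleton_times)
  also have "\<dots> \<le> ennreal (2 * exp (- (V * sqrt (real B * C))\<^sup>2 / (2 * real (card ({k} \<times> {..<B})) * V\<^sup>2)))"
    using H B C V by (intro emeasure_norm_sum_ge_le) auto
  also have "- (V * sqrt (real B * C))\<^sup>2 / (2 * real (card ({k} \<times> {..<B})) * V\<^sup>2) = - C / 2"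
    using B C V by (simp add: power_mult_distrib)
  finally show ?thesis .
qed

lemma emeasure_block_sum_large_le:
  assumes H: "finite H" and B: "0 < B" and C: "0 < C"
  shows "emeasure (PiM (H \<times> {..<B}) (\<lambda>_. D))
      {w \<in> space (PiM (H \<times> {..<B}) (\<lambda>_. D)). \<exists>k\<in>H. V * sqrt (real B * C) < norm (\<Sum>i<B. Y (w (k, i)))}
    \<le> ennreal (2 * real (card H) * exp (- C / 2))"
proof -
  define M where "M = PiM (H \<times> {..<B}) (\<lambda>_. D)"
  define E where "E k = {w \<in> space M. V * sqrt (real B * C) < norm (\<Sum>i<B. Y (w (k, i)))}" for k
  have "{w \<in> space M. \<exists>k\<in>H. V * sqrt (real B * C) < norm (\<Sum>i<B. Y (w (k, i)))} = (\<Union>k\<in>H. E k)"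
    by (auto simp: E_def)
  also have "emeasure M \<dots> \<le> (\<Sum>k\<in>H. emeasure M (E k))"
    using H sets_block_sum_gt unfolding E_def M_def by (intro emeasure_subadditive_finite) auto
  also have "\<dots> \<le> (\<Sum>k\<in>H. ennreal (2 * exp (- C / 2)))"
    using emeasure_block_sum_gt_le[OF H _ B C] unfolding E_def M_def by (intro sum_mono) auto
  also have "\<dots> = ennreal (2 * real (card H) * exp (- C / 2))"
    by (simp add: ennreal_mult ennreal_of_nat_eq_real_of_nat mult_ac)
  finally show ?thesis
    unfolding M_def .
qed

end

section \<open>The filtering rules\<close>

lemma near_set_subset: "near_set K r m k \<subseteq> {..<K}"
  by (auto simp: near_set_def)

lemma finite_near_set: "finite (near_set K r m k)"
  using finite_subset[OF near_set_subset finite_lessThan] .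

lemma honest_majority:
  assumes "0 < K" "\<alpha> < 1/2" "(1 - \<alpha>) * real K \<le> real (card H)"
  shows "real K / 2 < real (card H)"
proof -
  have "real K / 2 < (1 - \<alpha>) * real K"
    using assms(1,2) by (simp add: field_simps)
  then show ?thesis
    using assms(3) by linarith
qed

lemma med_cand_near_honest:
  assumes "med_cand K r m k" "H \<subseteq> {..<K}" "real K / 2 < real (card H)"
  obtains h where "h \<in> H" "norm (m h - m k) \<le> r"
proof -
  have "near_set K r m k \<inter> H \<noteq> {}"
  proof
    assume "near_set K r m k \<inter> H = {}"
    then have "card (near_set K r m k \<union> H) = card (near_set K r m k) + card H"
      by (rule card_Un_disjoint[OF finite_near_set finite_subset[OF assms(2) finite_lessThan]])
    moreover have "card (near_set K r m k \<union> H) \<le> K"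
      using card_mono[OF finite_lessThan Un_least[OF near_set_subset assms(2)]] by simp
    ultimately show False
      using assms(1,3) unfolding med_cand_def by linarith
  qed
  then show thesis
    using that by (auto simp: near_set_def)
qed

lemma norm_med_cand_minus_le:
  assumes "med_cand K r m k" "H \<subseteq> {..<K}" "real K / 2 < real (card H)"
    and "\<And>h. h \<in> H \<Longrightarrow> norm (m h - g) \<le> \<rho>"
  shows "norm (m k - g) \<le> r + \<rho>"
proof -
  obtain h where h: "h \<in> H" "norm (m k - m h) \<le> r"
    using med_cand_near_honest[OF assms(1-3)] by (metis norm_minus_commute)
  show ?thesis
    by (rule norm_diff_triangle_le[OF h(2) assms(4)[OF h(1)]])
qed

lemma subset_near_set:
  assumes "H \<subseteq> {..<K}" "\<And>j. j \<in> H \<Longrightarrow> norm (m j - c) \<le> \<rho>" "norm (m k - c) \<le> \<sigma>" "\<rho> + \<sigma> \<le> r"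
  shows "H \<subseteq> near_set K r m k"
proof
  fix j
  assume j: "j \<in> H"
  have "norm (c - m k) \<le> \<sigma>"
    using assms(3) by (simp add: norm_minus_commute)
  from norm_diff_triangle_le[OF assms(2)[OF j] this]
  show "j \<in> near_set K r m k"
    using j assms(1,4) by (auto simp: near_set_def)
qed

lemma avg_over_minus:
  assumes "finite G" "G \<noteq> {}"
  shows "avg_over G m - g = (1 / real (card G)) *\<^sub>R (\<Sum>j\<in>G. m j - g)"
proof -
  have "real (card G) \<noteq> 0"
    using assms by simp
  then show ?thesis
    by (simp add: avg_over_def sum_subtractf scaleR_diff_right sum_constant_scaleR)
qed

lemma norm_avg_over_minus_le:
  assumes "finite G" "G \<noteq> {}" "\<And>j. j \<in> G \<Longrightarrow> norm (m j - g) \<le> R"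
  shows "norm (avg_over G m - g) \<le> R"
proof -
  have G: "0 < real (card G)"
    using assms(1,2) by (simp add: card_gt_0_iff)
  have "norm (avg_over G m - g) = norm (\<Sum>j\<in>G. m j - g) / real (card G)"
    using assms(1,2) by (simp add: avg_over_minus divide_inverse_commute)
  also have "\<dots> \<le> (\<Sum>j\<in>G. R) / real (card G)"
    using G assms(3) by (intro divide_right_mono order_trans[OF norm_sum sum_mono]) auto
  also have "\<dots> = R"
    using G by simp
  finally show ?thesis .
qed

lemma norm_avg_near_set_minus_le:
  assumes cand: "med_cand K r m k" and r: "0 \<le> r"
    and H: "H \<subseteq> {..<K}" "real K / 2 < real (card H)" "\<And>h. h \<in> H \<Longrightarrow> norm (m h - g) \<le> \<rho>"
  shows "norm (avg_over (near_set K (2 * r) m k) m - g) \<le> 3 * r + \<rho>"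
proof (rule norm_avg_over_minus_le[OF finite_near_set])
  have k: "norm (m k - g) \<le> r + \<rho>"
    by (rule norm_med_cand_minus_le[OF cand H])
  show "near_set K (2 * r) m k \<noteq> {}"
    using cand r by (auto simp: med_cand_def near_set_def)
  fix j
  assume "j \<in> near_set K (2 * r) m k"
  then have "norm (m j - m k) \<le> 2 * r"
    by (simp add: near_set_def)
  then show "norm (m j - g) \<le> 3 * r + \<rho>"
    using norm_diff_triangle_le[OF _ k] by fastforce
qed

lemma filter_output_norm_minus_le:
  assumes F: "filter_output K \<alpha> V T m v" and T: "0 \<le> T" "T \<le> 2 * V"
    and H: "H \<subseteq> {..<K}" "real K / 2 < real (card H)" "\<And>h. h \<in> H \<Longrightarrow> norm (m h - g) \<le> V"
  shows "norm (v - g) \<le> 7 * V"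
proof -
  have rule1: "norm (v - g) \<le> 7 * V"
    if "med_cand K T m k" "v = avg_over (near_set K (2 * T) m k) m" for k
    using norm_avg_near_set_minus_le[OF that(1) T(1) H] T(2) that(2) by simp
  have rule2: "norm (v - g) \<le> 7 * V"
    if "med_cand K (2 * V) m k" "v = avg_over (near_set K (4 * V) m k) m" for k
    using norm_avg_near_set_minus_le[OF that(1) _ H] T that(2) by simp
  show ?thesis
    using F rule1 rule2 unfolding filter_output_def by blast
qed

lemma filter_output_rule1:
  assumes F: "filter_output K \<alpha> V T m v"
    and H: "H \<subseteq> {..<K}" "(1 - \<alpha>) * real K \<le> real (card H)" "real K / 2 < real (card H)"
    and close: "\<And>h. h \<in> H \<Longrightarrow> norm (m h - g) \<le> T / 2"
  obtains G where "H \<subseteq> G" "G \<subseteq> {..<K}" "\<And>j. j \<in> G \<Longrightarrow> norm (m j - g) \<le> 7 / 2 * T"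
    and "v = avg_over G m"
proof -
  have cand_close: "norm (m k - g) \<le> 3 / 2 * T" if "med_cand K T m k" for k
    using norm_med_cand_minus_le[OF that H(1,3) close] by simp
  have honest_near: "H \<subseteq> near_set K (2 * T) m k" if "med_cand K T m k" for k
    using subset_near_set[where m = m and c = g and \<rho> = "T / 2", OF H(1) close cand_close[OF that]] by simp
  \<comment> \<open>Rule 1 applies: honest nodes are candidates, and every candidate keeps all honest nodes.\<close>
  obtain h0 where h0: "h0 \<in> H"
    using H(3) by fastforce
  have "H \<subseteq> near_set K T m h0"
    using subset_near_set[where m = m and c = g and \<rho> = "T / 2", OF H(1) close close[OF h0]] by simp
  then have "card H \<le> card (near_set K T m h0)"
    by (rule card_mono[OF finite_near_set])
  then have "\<exists>k. med_cand K T m k"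
    using h0 H(1,3) unfolding med_cand_def by (intro exI[of _ h0]) auto
  moreover have "(1 - \<alpha>) * real K \<le> real (card (near_set K (2 * T) m k))" if "med_cand K T m k" for k
    using card_mono[OF finite_near_set honest_near[OF that]] H(2) by linarith
  ultimately obtain k where k: "med_cand K T m k" "v = avg_over (near_set K (2 * T) m k) m"
    using F unfolding filter_output_def by fastforce
  show thesis
  proof (rule that[OF honest_near[OF k(1)] near_set_subset _ k(2)])
    fix j
    assume "j \<in> near_set K (2 * T) m k"
    then have "norm (m j - m k) \<le> 2 * T"
      by (simp add: near_set_def)
    then show "norm (m j - g) \<le> 7 / 2 * T"
      using norm_diff_triangle_le[OF _ cand_close[OF k(1)]] by fastforce
  qed
qed

lemma norm_avg_over_minus_le_honest:
  assumes G: "finite G" "H \<subseteq> G" "card G \<le> K"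
    and H: "(1 - \<alpha>) * real K \<le> real (card H)" and \<alpha>: "\<alpha> < 1" and K: "0 < K"
    and R: "\<And>j. j \<in> G \<Longrightarrow> norm (m j - g) \<le> R"
  shows "norm (avg_over G m - g) \<le> norm (\<Sum>h\<in>H. m h - g) / ((1 - \<alpha>) * real K) + \<alpha> * R"
proof -
  have HK: "0 < (1 - \<alpha>) * real K"
    using \<alpha> K by simp
  have HG: "card H \<le> card G"
    by (rule card_mono[OF G(1,2)])
  then have cardG: "0 < real (card G)"
    using H HK by linarith
  then have "G \<noteq> {}"
    by auto
  then obtain j where "j \<in> G"
    by blast
  then have R_nonneg: "0 \<le> R"
    using R[of j] norm_ge_zero order_trans by blast
  have "norm (\<Sum>j\<in>G - H. m j - g) \<le> (\<Sum>j\<in>G - H. R)"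
    using R by (intro order_trans[OF norm_sum sum_mono]) auto
  also have "\<dots> = (real (card G) - real (card H)) * R"
    using G HG by (simp add: card_Diff_subset finite_subset of_nat_diff)
  also have "\<dots> \<le> (\<alpha> * real (card G)) * R"
  proof -
    have "(1 - \<alpha>) * real (card G) \<le> (1 - \<alpha>) * real K"
      using G(3) \<alpha> by (intro mult_left_mono) auto
    then show ?thesis
      using H R_nonneg by (intro mult_right_mono) (auto simp: algebra_simps)
  qed
  finally have byz_part: "norm (\<Sum>j\<in>G - H. m j - g) / real (card G) \<le> \<alpha> * R"
    using cardG by (simp add: divide_le_eq mult_ac)
  have honest_part: "norm (\<Sum>h\<in>H. m h - g) / real (card G) \<le> norm (\<Sum>h\<in>H. m h - g) / ((1 - \<alpha>) * real K)"
    using H HG HK by (intro divide_left_mono) auto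
  have "norm (avg_over G m - g) = norm ((\<Sum>h\<in>H. m h - g) + (\<Sum>j\<in>G - H. m j - g)) / real (card G)"
    using G \<open>G \<noteq> {}\<close>
    by (simp add: avg_over_minus divide_inverse_commute sum.subset_diff[of H G] add.commute)
  also have "\<dots> \<le> norm (\<Sum>h\<in>H. m h - g) / real (card G) + norm (\<Sum>j\<in>G - H. m j - g) / real (card G)"
    using cardG by (simp add: add_divide_distrib[symmetric] divide_right_mono norm_triangle_ineq)
  finally show ?thesis
    using honest_part byz_part by linarith
qed

lemma filter_output_sq_norm_minus_le_honest:
  assumes F: "filter_output K \<alpha> V T m v"
    and H: "H \<subseteq> {..<K}" "(1 - \<alpha>) * real K \<le> real (card H)"
    and \<alpha>: "0 \<le> \<alpha>" "\<alpha> < 1/2" and K: "0 < K"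
    and close: "\<And>h. h \<in> H \<Longrightarrow> norm (m h - g) \<le> T / 2"
  shows "(norm (v - g))\<^sup>2 \<le> 2 * (norm (\<Sum>h\<in>H. m h - g) / ((1 - \<alpha>) * real K))\<^sup>2 + 49 / 2 * \<alpha>\<^sup>2 * T\<^sup>2"
proof -
  have majority: "real K / 2 < real (card H)"
    by (rule honest_majority[OF K \<alpha>(2) H(2)])
  obtain G where G: "H \<subseteq> G" "G \<subseteq> {..<K}" "\<And>j. j \<in> G \<Longrightarrow> norm (m j - g) \<le> 7 / 2 * T"
    and v: "v = avg_over G m"
    using filter_output_rule1[OF F H majority close] by blast
  obtain h0 where "h0 \<in> H"
    using majority by fastforce
  then have T: "0 \<le> T"
    using close[of h0] norm_ge_zero[of "m h0 - g"] by linarith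
  define X where "X = norm (\<Sum>h\<in>H. m h - g) / ((1 - \<alpha>) * real K)"
  define Z where "Z = \<alpha> * (7 / 2 * T)"
  have "norm (v - g) \<le> X + Z"
    unfolding v X_def Z_def
    using G \<alpha> K H(2) finite_subset[OF G(2)] card_mono[OF finite_lessThan G(2)]
    by (intro norm_avg_over_minus_le_honest) auto
  moreover have "0 \<le> X" "0 \<le> Z"
    using T \<alpha> K by (auto simp: X_def Z_def)
  ultimately have "(norm (v - g))\<^sup>2 \<le> (X + Z)\<^sup>2"
    by (intro power_mono) auto
  also have "\<dots> \<le> 2 * X\<^sup>2 + 2 * Z\<^sup>2"
    using zero_le_power2[of "X - Z"] by (simp add: power2_eq_square algebra_simps)
  also have "\<dots> = 2 * X\<^sup>2 + 49 / 2 * \<alpha>\<^sup>2 * T\<^sup>2"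
    by (simp add: Z_def power2_eq_square)
  finally show ?thesis
    unfolding X_def .
qed

section \<open>One epoch of the filtered gradient estimator\<close>

lemma (in prob_space) integral_le_of_bound_off_event:
  fixes f S :: "'a \<Rightarrow> real"
  assumes f: "f \<in> borel_measurable M" "\<And>w. w \<in> space M \<Longrightarrow> 0 \<le> f w" "\<And>w. w \<in> space M \<Longrightarrow> f w \<le> c"
    and S: "S \<in> borel_measurable M" "(\<integral>\<^sup>+w. S w \<partial>M) \<le> ennreal s" "0 \<le> s"
    and A: "A \<in> sets M" "emeasure M A \<le> ennreal p" "0 \<le> p"
    and off: "\<And>w. w \<in> space M \<Longrightarrow> w \<notin> A \<Longrightarrow> f w \<le> S w"
  shows "(\<integral>w. f w \<partial>M) \<le> s + c * p"
proof -
  obtain w0 where "w0 \<in> space M"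
    using not_empty by blast
  then have c: "0 \<le> c"
    using f(2,3) order_trans by blast
  have "integrable M f"
    using f by (intro integrable_const_bound[where B = c]) auto
  then have "ennreal (\<integral>w. f w \<partial>M) = (\<integral>\<^sup>+w. f w \<partial>M)"
    using f(2) by (intro nn_integral_eq_integral[symmetric] AE_I2) auto
  also have "\<dots> \<le> (\<integral>\<^sup>+w. ennreal (S w) + ennreal c * indicator A w \<partial>M)"
  proof (rule nn_integral_mono)
    fix w
    assume "w \<in> space M"
    show "ennreal (f w) \<le> ennreal (S w) + ennreal c * indicator A w"
    proof (cases "w \<in> A")
      case True
      have "ennreal (f w) \<le> ennreal c"
        using f(3)[OF \<open>w \<in> space M\<close>] by (rule ennreal_leI)
      then show ?thesis
        using True by (simp add: add_increasing)
    next
      case False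
      then show ?thesis
        using off[OF \<open>w \<in> space M\<close>] by (simp add: ennreal_leI)
    qed
  qed
  also have "\<dots> = (\<integral>\<^sup>+w. S w \<partial>M) + ennreal c * emeasure M A"
    using S(1) A(1) by (simp add: nn_integral_add nn_integral_cmult_indicator)
  also have "\<dots> \<le> ennreal s + ennreal c * ennreal p"
    using S(2) A(2) by (intro add_mono mult_left_mono) auto
  also have "\<dots> = ennreal (s + c * p)"
    using S(3) A(3) c by (simp add: ennreal_plus ennreal_mult)
  finally show ?thesis
    using S(3) A(3) c by (subst (asm) ennreal_le_iff) auto
qed

text \<open>\<open>Y\<close> is the centred stochastic gradient at the current point, honest node \<open>k\<close> uses the
  samples \<open>w (k, i)\<close> with \<open>i < B\<close>, and \<open>2 V \<surd>(C / B)\<close> is the threshold \<open>T\<^sub>\<mu>\<close>.\<close>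

locale filtered_epoch = bounded_centered_rv D Y V
  for D :: "'b measure" and Y :: "'b \<Rightarrow> 'a::euclidean_space" and V :: real +
  fixes K B :: nat and \<alpha> C :: real and H :: "nat set" and g :: 'a
    and m :: "(nat \<times> nat \<Rightarrow> 'b) \<Rightarrow> nat \<Rightarrow> 'a" and mu :: "(nat \<times> nat \<Rightarrow> 'b) \<Rightarrow> 'a"
  assumes honest_subset: "H \<subseteq> {..<K}"
    and card_honest: "(1 - \<alpha>) * real K \<le> real (card H)"
    and \<alpha>_nonneg: "0 \<le> \<alpha>" and \<alpha>_less: "\<alpha> < 1/2"
    and K_pos: "0 < K" and B_pos: "0 < B" and C_pos: "0 < C" and C_le: "C \<le> real B"
    and honest_message: "\<And>w k. k \<in> H \<Longrightarrow> m w k - g = (1 / real B) *\<^sub>R (\<Sum>i<B. Y (w (k, i)))"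
    and borel_measurable_mu: "mu \<in> borel_measurable (PiM (H \<times> {..<B}) (\<lambda>_. D))"
    and filter_output_mu: "\<And>w. w \<in> space (PiM (H \<times> {..<B}) (\<lambda>_. D)) \<Longrightarrow>
      filter_output K \<alpha> V (2 * V * sqrt (C / real B)) (m w) (mu w)"
begin

abbreviation samples :: "(nat \<times> nat \<Rightarrow> 'b) measure" where
  "samples \<equiv> PiM (H \<times> {..<B}) (\<lambda>_. D)"

definition bad_event :: "(nat \<times> nat \<Rightarrow> 'b) set" where
  "bad_event = {w \<in> space samples. \<exists>k\<in>H. V * sqrt (real B * C) < norm (\<Sum>i<B. Y (w (k, i)))}"

lemma finite_honest: "finite H"
  using finite_subset[OF honest_subset finite_lessThan] .

lemma card_honest_gt_half: "real K / 2 < real (card H)"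
  by (rule honest_majority[OF K_pos \<alpha>_less card_honest])

lemma threshold_bounds:
  shows "0 \<le> 2 * V * sqrt (C / real B)" and "2 * V * sqrt (C / real B) \<le> 2 * V"
    and "(2 * V * sqrt (C / real B))\<^sup>2 = 4 * V\<^sup>2 * C / real B"
proof -
  have "sqrt (C / real B) \<le> 1"
    using C_le B_pos by simp
  then show "0 \<le> 2 * V * sqrt (C / real B)" "2 * V * sqrt (C / real B) \<le> 2 * V"
    using V_nonneg C_pos by (auto intro: mult_left_le)
  show "(2 * V * sqrt (C / real B))\<^sup>2 = 4 * V\<^sup>2 * C / real B"
    using C_pos B_pos by (simp add: power_mult_distrib)
qed

lemma norm_honest_message_le:
  assumes "w \<in> space samples" "k \<in> H"
  shows "norm (m w k - g) \<le> V"
  using norm_block_sum_le[OF assms] B_pos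
  by (simp add: honest_message[OF assms(2)] divide_le_eq mult.commute)

lemma norm_honest_message_le_off_bad:
  assumes "w \<in> space samples" "w \<notin> bad_event" "k \<in> H"
  shows "norm (m w k - g) \<le> V * sqrt (C / real B)"
proof -
  have "norm (m w k - g) = norm (\<Sum>i<B. Y (w (k, i))) / real B"
    by (simp add: honest_message[OF assms(3)] divide_inverse_commute)
  also have "\<dots> \<le> V * sqrt (real B * C) / real B"
    using assms by (intro divide_right_mono) (auto simp: bad_event_def)
  also have "\<dots> = V * sqrt (C / real B)"
    using B_pos by (simp add: real_sqrt_mult real_sqrt_divide field_simps)
  finally show ?thesis .
qed

lemma norm_sum_honest_messages:
  "norm (\<Sum>k\<in>H. m w k - g) = norm (\<Sum>p\<in>H \<times> {..<B}. Y (w p)) / real B"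
proof -
  have "(\<Sum>k\<in>H. m w k - g) = (1 / real B) *\<^sub>R (\<Sum>p\<in>H \<times> {..<B}. Y (w p))"
    by (simp add: honest_message scaleR_sum_right sum.cartesian_product)
  then show ?thesis
    by (simp add: divide_inverse_commute)
qed

lemma sq_error_le:
  assumes "w \<in> space samples"
  shows "(norm (mu w - g))\<^sup>2 \<le> 49 * V\<^sup>2"
proof -
  have "norm (mu w - g) \<le> 7 * V"
    using filter_output_mu[OF assms] threshold_bounds(1,2) honest_subset card_honest_gt_half
      norm_honest_message_le[OF assms]
    by (rule filter_output_norm_minus_le)
  then have "(norm (mu w - g))\<^sup>2 \<le> (7 * V)\<^sup>2"
    by (intro power_mono) auto
  then show ?thesis
    by (simp add: power_mult_distrib)
qed

lemma sq_error_le_off_bad: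
  assumes "w \<in> space samples" "w \<notin> bad_event"
  shows "(norm (mu w - g))\<^sup>2
    \<le> 2 * (norm (\<Sum>p\<in>H \<times> {..<B}. Y (w p)) / (real B * ((1 - \<alpha>) * real K)))\<^sup>2
      + 98 * \<alpha>\<^sup>2 * V\<^sup>2 * C / real B"
proof -
  have bound: "(norm (mu w - g))\<^sup>2 \<le> 2 * (norm (\<Sum>k\<in>H. m w k - g) / ((1 - \<alpha>) * real K))\<^sup>2
      + 49 / 2 * \<alpha>\<^sup>2 * (2 * V * sqrt (C / real B))\<^sup>2"
    by (rule filter_output_sq_norm_minus_le_honest[OF filter_output_mu[OF assms(1)] honest_subset
          card_honest \<alpha>_nonneg \<alpha>_less K_pos])
      (use norm_honest_message_le_off_bad[OF assms] in simp)
  have honest_part: "norm (\<Sum>k\<in>H. m w k - g) / ((1 - \<alpha>) * real K)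
      = norm (\<Sum>p\<in>H \<times> {..<B}. Y (w p)) / (real B * ((1 - \<alpha>) * real K))"
    by (simp add: norm_sum_honest_messages divide_divide_eq_left)
  have threshold_part: "49 / 2 * \<alpha>\<^sup>2 * (2 * V * sqrt (C / real B))\<^sup>2 = 98 * \<alpha>\<^sup>2 * V\<^sup>2 * C / real B"
    by (simp add: threshold_bounds(3))
  show ?thesis
    using bound unfolding honest_part threshold_part .
qed

lemma bad_event_measurable: "bad_event \<in> sets samples"
proof -
  have "bad_event = (\<Union>k\<in>H. {w \<in> space samples. V * sqrt (real B * C) < norm (\<Sum>i<B. Y (w (k, i)))})"
    by (auto simp: bad_event_def)
  also have "\<dots> \<in> sets samples"
    using finite_honest sets_block_sum_gt by (intro sets.finite_UN) auto
  finally show ?thesis .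
qed

lemma emeasure_bad_event_le: "emeasure samples bad_event \<le> ennreal (2 * real K * exp (- C / 2))"
proof -
  have "emeasure samples bad_event \<le> ennreal (2 * real (card H) * exp (- C / 2))"
    unfolding bad_event_def by (rule emeasure_block_sum_large_le[OF finite_honest B_pos C_pos])
  also have "\<dots> \<le> ennreal (2 * real K * exp (- C / 2))"
    using card_mono[OF finite_lessThan honest_subset] by (intro ennreal_leI) simp
  finally show ?thesis .
qed

lemma nn_integral_honest_part_le:
  assumes c: "0 \<le> c"
  shows "(\<integral>\<^sup>+w. 2 * (norm (\<Sum>p\<in>H \<times> {..<B}. Y (w p)) / (real B * ((1 - \<alpha>) * real K)))\<^sup>2 + c \<partial>samples)
    \<le> ennreal (2 * V\<^sup>2 / ((1 - \<alpha>)\<^sup>2 * real K * real B) + c)"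
proof -
  interpret samples: prob_space samples
    by (rule prob_space_PiM) (rule prob_space_axioms)
  define a where "a = 2 / (real B * ((1 - \<alpha>) * real K))\<^sup>2"
  have a: "0 \<le> a"
    by (simp add: a_def)
  have S: "(\<lambda>w. \<Sum>p\<in>H \<times> {..<B}. Y (w p)) \<in> borel_measurable samples"
    by (intro borel_measurable_PiM_sum_components borel_measurable_Y order_refl)
  have "(\<integral>\<^sup>+w. 2 * (norm (\<Sum>p\<in>H \<times> {..<B}. Y (w p)) / (real B * ((1 - \<alpha>) * real K)))\<^sup>2 + c \<partial>samples)
      = (\<integral>\<^sup>+w. ennreal a * (norm (\<Sum>p\<in>H \<times> {..<B}. Y (w p)))\<^sup>2 + ennreal c \<partial>samples)"
    using a c by (intro nn_integral_cong) (simp add: a_def power_divide flip: ennreal_plus ennreal_mult)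
  also have "\<dots> = ennreal a * (\<integral>\<^sup>+w. (norm (\<Sum>p\<in>H \<times> {..<B}. Y (w p)))\<^sup>2 \<partial>samples) + ennreal c"
    using S by (simp add: nn_integral_add nn_integral_cmult samples.emeasure_space_1)
  also have "\<dots> \<le> ennreal a * ennreal (real (card (H \<times> {..<B})) * V\<^sup>2) + ennreal c"
    using nn_integral_norm_sum_sq_le[of "H \<times> {..<B}"] finite_honest
    by (intro add_mono mult_left_mono) auto
  also have "\<dots> = ennreal (a * (real (card H) * real B * V\<^sup>2) + c)"
    using a c by (simp add: ennreal_plus ennreal_mult card_cartesian_product)
  also have "\<dots> \<le> ennreal (2 * V\<^sup>2 / ((1 - \<alpha>)\<^sup>2 * real K * real B) + c)"
  proof (rule ennreal_leI)
    have "a * (real (card H) * real B * V\<^sup>2) \<le> a * (real K * real B * V\<^sup>2)"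
      using a card_mono[OF finite_lessThan honest_subset] by (intro mult_left_mono mult_right_mono) auto
    also have "\<dots> = 2 * V\<^sup>2 / ((1 - \<alpha>)\<^sup>2 * real K * real B)"
    proof -
      have "2 / (real B * (\<beta> * real K))\<^sup>2 * (real K * real B * V\<^sup>2) = 2 * V\<^sup>2 / (\<beta>\<^sup>2 * real K * real B)"
        if "\<beta> \<noteq> 0" for \<beta> :: real
        using that K_pos B_pos by (simp add: field_simps power2_eq_square)
      then show ?thesis
        using \<alpha>_less by (simp add: a_def)
    qed
    finally show "a * (real (card H) * real B * V\<^sup>2) + c \<le> 2 * V\<^sup>2 / ((1 - \<alpha>)\<^sup>2 * real K * real B) + c"
      by simp
  qed
  finally show ?thesis .
qed

lemma mean_sq_error_le:
  "(\<integral>w. (norm (mu w - g))\<^sup>2 \<partial>samples)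
    \<le> 2 * V\<^sup>2 / ((1 - \<alpha>)\<^sup>2 * real K * real B) + 98 * \<alpha>\<^sup>2 * V\<^sup>2 * C / real B
      + 49 * V\<^sup>2 * (2 * real K * exp (- C / 2))"
proof -
  interpret samples: prob_space samples
    by (rule prob_space_PiM) (rule prob_space_axioms)
  have error: "(\<lambda>w. (norm (mu w - g))\<^sup>2) \<in> borel_measurable samples"
    using borel_measurable_mu by measurable
  have honest_part: "(\<lambda>w. 2 * (norm (\<Sum>p\<in>H \<times> {..<B}. Y (w p)) / (real B * ((1 - \<alpha>) * real K)))\<^sup>2
      + 98 * \<alpha>\<^sup>2 * V\<^sup>2 * C / real B) \<in> borel_measurable samples"
    using borel_measurable_PiM_sum_components[OF borel_measurable_Y order_refl] by measurable
  show ?thesis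
    by (rule samples.integral_le_of_bound_off_event[OF error _ sq_error_le honest_part
          nn_integral_honest_part_le _ bad_event_measurable emeasure_bad_event_le _ sq_error_le_off_bad])
      (use C_pos in auto)
qed

end

lemma error_terms_le:
  fixes \<alpha> \<delta> V C :: real and K B :: nat
  assumes \<alpha>: "0 \<le> \<alpha>" "\<alpha> < 1/2" and K: "0 < K" and B: "0 < B" and C: "0 < C"
    and \<delta>: "0 < \<delta>" "\<delta> \<le> 1 / (25 * real K * real B)" and C_def: "C = 2 * ln (2 * real K / \<delta>)"
  shows "2 * V\<^sup>2 / ((1 - \<alpha>)\<^sup>2 * real K * real B) + 98 * \<alpha>\<^sup>2 * V\<^sup>2 * C / real B
      + 49 * V\<^sup>2 * (2 * real K * exp (- C / 2))
    \<le> 4 * V\<^sup>2 / ((1 - \<alpha>)\<^sup>2 * real K * real B) + 272 * \<alpha>\<^sup>2 * V\<^sup>2 * C / ((1 - \<alpha>)\<^sup>2 * real B)"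
proof -
  have shrink: "(1 - \<alpha>)\<^sup>2 \<le> 1" "0 < (1 - \<alpha>)\<^sup>2"
    using \<alpha> by (auto simp: power_le_one)
  have "2 * real K * exp (- C / 2) = \<delta>"
    using K \<delta>(1) by (simp add: C_def exp_minus)
  then have "49 * V\<^sup>2 * (2 * real K * exp (- C / 2)) = 49 * V\<^sup>2 * \<delta>"
    by simp
  also have "\<dots> \<le> 49 * V\<^sup>2 * (1 / (25 * real K * real B))"
    using \<delta>(2) by (intro mult_left_mono) auto
  also have "\<dots> \<le> 2 * V\<^sup>2 / (real K * real B)"
    using K B by (simp add: field_simps)
  also have "\<dots> \<le> 2 * V\<^sup>2 / ((1 - \<alpha>)\<^sup>2 * real K * real B)"
    using shrink K B by (simp add: frac_le mult_le_cancel_right1 mult.assoc)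
  finally have bad_part: "49 * V\<^sup>2 * (2 * real K * exp (- C / 2)) \<le> 2 * V\<^sup>2 / ((1 - \<alpha>)\<^sup>2 * real K * real B)" .
  have "98 * \<alpha>\<^sup>2 * V\<^sup>2 * C / real B \<le> 98 * \<alpha>\<^sup>2 * V\<^sup>2 * C / ((1 - \<alpha>)\<^sup>2 * real B)"
    using shrink B C by (intro frac_le) (auto intro: mult_le_cancel_right1)
  also have "\<dots> \<le> 272 * \<alpha>\<^sup>2 * V\<^sup>2 * C / ((1 - \<alpha>)\<^sup>2 * real B)"
    using shrink B C by (intro divide_right_mono mult_right_mono) auto
  finally have threshold_part: "98 * \<alpha>\<^sup>2 * V\<^sup>2 * C / real B \<le> 272 * \<alpha>\<^sup>2 * V\<^sup>2 * C / ((1 - \<alpha>)\<^sup>2 * real B)" .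
  have "2 * V\<^sup>2 / ((1 - \<alpha>)\<^sup>2 * real K * real B) + 98 * \<alpha>\<^sup>2 * V\<^sup>2 * C / real B
      + 49 * V\<^sup>2 * (2 * real K * exp (- C / 2))
    \<le> 2 * V\<^sup>2 / ((1 - \<alpha>)\<^sup>2 * real K * real B) + 272 * \<alpha>\<^sup>2 * V\<^sup>2 * C / ((1 - \<alpha>)\<^sup>2 * real B)
      + 2 * V\<^sup>2 / ((1 - \<alpha>)\<^sup>2 * real K * real B)"
    by (intro add_mono order_refl threshold_part bad_part)
  also have "\<dots> = 4 * V\<^sup>2 / ((1 - \<alpha>)\<^sup>2 * real K * real B) + 272 * \<alpha>\<^sup>2 * V\<^sup>2 * C / ((1 - \<alpha>)\<^sup>2 * real B)"
    by (simp add: add_divide_distrib[symmetric])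
  finally show ?thesis .
qed

theorem lemma4:
  fixes D :: "'b measure"
    and gs :: "'a::euclidean_space \<Rightarrow> 'b \<Rightarrow> 'a"
    and gradf :: "'a \<Rightarrow> 'a"
    and V \<alpha> \<delta> C :: real
    and K B :: nat
    and Hon :: "nat set"
    and x :: 'a
    and byz :: "(nat \<times> nat \<Rightarrow> 'b) \<Rightarrow> nat \<Rightarrow> 'a"
    and mu :: "(nat \<times> nat \<Rightarrow> 'b) \<Rightarrow> 'a"
  assumes "prob_space D"
    and "\<And>y. gs y \<in> borel_measurable D"
    and "\<And>y. integrable D (gs y)"
    and "\<And>y. gradf y = (\<integral>\<xi>. gs y \<xi> \<partial>D)"
    and "\<And>y \<xi>. \<xi> \<in> space D \<Longrightarrow> norm (gs y \<xi> - gradf y) \<le> V"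
    and "K > 0" and "Hon \<subseteq> {..<K}" and "real (card Hon) \<ge> (1 - \<alpha>) * real K"
    and "0 \<le> \<alpha>" and "\<alpha> < 1/2"
    and "B > 0" and "0 < \<delta>" and "\<delta> < 1"
    and "exp (\<delta> * real B / (2 * (1 - 2*\<delta>))) \<le> 2 * real K / \<delta>"
    and "2 * real K / \<delta> \<le> exp (real B / 2)"
    and "\<delta> \<le> 1 / (25 * real K * real B)"
    and "C = 2 * ln (2 * real K / \<delta>)"
    and "mu \<in> borel_measurable (PiM (Hon \<times> {..<B}) (\<lambda>_. D))"
    and "\<And>\<omega>. \<omega> \<in> space (PiM (Hon \<times> {..<B}) (\<lambda>_. D)) \<Longrightarrow>
           filter_output K \<alpha> V (2 * V * sqrt (C / real B))
             (\<lambda>k. if k \<in> Hon then (1 / real B) *\<^sub>R (\<Sum>i<B. gs x (\<omega> (k, i))) else byz \<omega> k)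
             (mu \<omega>)"
  shows "(\<integral>\<omega>. (norm (mu \<omega> - gradf x))\<^sup>2 \<partial>(PiM (Hon \<times> {..<B}) (\<lambda>_. D)))
           \<le> 4 * V\<^sup>2 / ((1 - \<alpha>)\<^sup>2 * real K * real B)
             + 272 * \<alpha>\<^sup>2 * V\<^sup>2 * C / ((1 - \<alpha>)\<^sup>2 * real B)"
proof -
  interpret D: prob_space D
    by (rule assms(1))
  have "1 < 2 * real K / \<delta>"
    using assms(6,12,13) by simp
  then have C: "0 < C" "C \<le> real B"
    using assms(15,17) ln_le_cancel_iff[of "2 * real K / \<delta>" "exp (real B / 2)"] by auto
  interpret filtered_epoch D "\<lambda>\<xi>. gs x \<xi> - gradf x" V K B \<alpha> C Hon "gradf x"
    "\<lambda>\<omega> k. if k \<in> Hon then (1 / real B) *\<^sub>R (\<Sum>i<B. gs x (\<omega> (k, i))) else byz \<omega> k" mu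
    using assms(3-11,18,19) C
    by unfold_locales (auto simp: D.prob_space sum_subtractf sum_constant_scaleR scaleR_diff_right)
  show ?thesis
    by (rule order_trans[OF mean_sq_error_le error_terms_le[OF assms(9,10,6,11) C(1) assms(12,16,17)]])
qed

end
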